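(* Let $l_H(s)$, $s\in\mathcal S$, be the codeword lengths of a Huffman code for $p$, $L_H=\sum_s p(s)l_H(s)$, and $l^{\max}_H=\max_s l_H(s)$. Then there exists an sAEDS with $N=2^{l^{\max}_H}$ states (with $N_s=2^{l^{\max}_H-l_H(s)}$) in which $l(E_{\hat x}(s))=l_H(s)$ for every $\hat x\in\mathcal X$ and $s\in\mathcal S$; consequently its average code length equals $L_H$ for every stationary distribution $Q$. In particular the optimal sAEDS with $2^{l^{\max}_H}$ states has average code length at most $L_H$.
   Context: Let $\mathcal S$ be a finite alphabet with $|\mathcal S|\ge 2$ and $p=\{p(s)\}$ a probability distribution with $p(s)>0$ for all $s$ (i.i.d. source). $\mathcal B=\{0,1\}^*$ (including the empty word), $l(\beta)$ the word length, $\lg=\log_2$. An AEDS with finite state set $\mathcal X$, $|\mathcal X|=N$, consists of maps $E_{\hat x}:\mathcal S\to\mathcal B$ and $F^-_{\hat x}:\mathcal S\to\mathcal X$ ($\hat x\in\mathcal X$) such that for every $x\in\mathcal X$ the words $E_{\hat x}(s)$ over all pairs $(\hat x,s)$ with $F^-_{\hat x}(s)=x$ are pairwise distinct and form a prefix-free set. The state chain is the Markov chain on $\mathcal X$ moving from $\hat x$ to $F^-_{\hat x}(s)$ with probability $p(s)$; for a stationary distribution $Q$ the average code length is $L=\sum_{\hat x}\sum_s p(s)Q(\hat x)l(E_{\hat x}(s))$. A state-divided AEDS (sAEDS) is an AEDS for which the sets $\mathcal X_s=\{F^-_{\hat x}(s):\hat x\in\mathcal X\}$, $s\in\mathcal S$,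 are pairwise disjoint with union $\mathcal X$; $N_s=|\mathcal X_s|$. For $x\in\mathcal X_s$, $\mathcal F^+_x=\{\hat x: F^-_{\hat x}(s)=x\}$; for each $s$ these sets partition $\mathcal X$. The optimal sAEDS with $N$ states is one minimizing $L$ among sAEDSs with $N$ states. *)

theory Defs
  imports Complex_Main "HOL-Library.Sublist"
begin

definition prefix_free :: "bool list set \<Rightarrow> bool" where
  "prefix_free W \<longleftrightarrow> (\<forall>u\<in>W. \<forall>v\<in>W. u \<noteq> v \<longrightarrow> \<not> prefix u v)"

text \<open>Alphabet = UNIV of the symbol type; state set X (finite, nonempty);
  E xh s = encoding E_xh(s); F xh s = next state F^-_xh(s).\<close>

definition aeds :: "'x set \<Rightarrow> ('x \<Rightarrow> 's \<Rightarrow> bool list) \<Rightarrow> ('x \<Rightarrow> 's \<Rightarrow> 'x) \<Rightarrow> bool" where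
  "aeds X E F \<longleftrightarrow> finite X \<and> X \<noteq> {} \<and> (\<forall>xh\<in>X. \<forall>s. F xh s \<in> X) \<and>
     (\<forall>x\<in>X. inj_on (\<lambda>(xh, s). E xh s) {(xh, s). xh \<in> X \<and> F xh s = x} \<and>
             prefix_free ((\<lambda>(xh, s). E xh s) ` {(xh, s). xh \<in> X \<and> F xh s = x}))"

definition state_set :: "'x set \<Rightarrow> ('x \<Rightarrow> 's \<Rightarrow> 'x) \<Rightarrow> 's \<Rightarrow> 'x set" where
  "state_set X F s = (\<lambda>xh. F xh s) ` X"

definition saeds :: "'x set \<Rightarrow> ('x \<Rightarrow> 's \<Rightarrow> bool list) \<Rightarrow> ('x \<Rightarrow> 's \<Rightarrow> 'x) \<Rightarrow> bool" where
  "saeds X E F \<longleftrightarrow> aeds X E F \<and>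
     (\<forall>s t. s \<noteq> t \<longrightarrow> state_set X F s \<inter> state_set X F t = {}) \<and>
     (\<Union>s. state_set X F s) = X"

definition stationary :: "('s::finite \<Rightarrow> real) \<Rightarrow> 'x set \<Rightarrow> ('x \<Rightarrow> 's \<Rightarrow> 'x) \<Rightarrow> ('x \<Rightarrow> real) \<Rightarrow> bool" where
  "stationary p X F Q \<longleftrightarrow> (\<forall>x\<in>X. 0 \<le> Q x) \<and> (\<Sum>x\<in>X. Q x) = 1 \<and>
     (\<forall>x\<in>X. Q x = (\<Sum>xh\<in>X. \<Sum>s\<in>{s. F xh s = x}. p s * Q xh))"

definition avg_len :: "('s::finite \<Rightarrow> real) \<Rightarrow> 'x set \<Rightarrow> ('x \<Rightarrow> 's \<Rightarrow> bool list) \<Rightarrow> ('x \<Rightarrow> real) \<Rightarrow> real" where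
  "avg_len p X E Q = (\<Sum>xh\<in>X. \<Sum>s\<in>UNIV. p s * Q xh * real (length (E xh s)))"

definition weight :: "('s \<Rightarrow> real) \<Rightarrow> 's set \<Rightarrow> real" where
  "weight p A = (\<Sum>s\<in>A. p s)"

text \<open>Huffman procedure on a forest, each tree represented by its set of leaves.
  huffman_run p T d: starting from forest T, some run of Huffman's algorithm
  (arbitrary tie-breaking) yields leaf depths d.\<close>

inductive huffman_run :: "('s \<Rightarrow> real) \<Rightarrow> 's set set \<Rightarrow> ('s \<Rightarrow> nat) \<Rightarrow> bool" for p where
  single: "huffman_run p {A} (\<lambda>s. 0)"
| merge: "\<lbrakk> A \<in> T; B \<in> T; A \<noteq> B;
            \<forall>C\<in>T. weight p A \<le> weight p C;
            \<forall>C\<in>T - {A}. weight p B \<le> weight p C;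
            huffman_run p (insert (A \<union> B) (T - {A, B})) d \<rbrakk>
          \<Longrightarrow> huffman_run p T (\<lambda>s. if s \<in> A \<union> B then Suc (d s) else d s)"

definition huffman_lengths :: "('s \<Rightarrow> real) \<Rightarrow> ('s \<Rightarrow> nat) \<Rightarrow> bool" where
  "huffman_lengths p l \<longleftrightarrow> huffman_run p ((\<lambda>s. {s}) ` UNIV) l"

end

(* Following each tree of Huffman's forest to the depth its root finally reaches, a merge
   replaces 2^-(k+1) + 2^-(k+1) by 2^-k, so Huffman lengths satisfy Kraft's equality: the
   2^-l(s) sum to 1. Hence the 2^lmax states split into blocks X_s of 2^(lmax - l(s)) states.
   On symbol s, state xh moves to the state of X_s indexed by xh div 2^l(s) and emits the
   l(s) low bits of xh. The states entering a common state share that high part and differ in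
   their low bits, so the codewords entering it are distinct words of one length, hence
   prefix-free. All codewords for s have length l(s), so the average length is L_H under every
   stationary distribution, and one exists because every finite Markov chain has one. *)

theory Submission
  imports Defs "HOL-Library.Disjoint_Sets"
begin

lemma huffman_run_kraft:
  assumes "huffman_run p T d" and "finite T" and "disjoint T" and "{} \<notin> T"
  shows "\<exists>f. (\<forall>A\<in>T. \<forall>s\<in>A. d s = f A) \<and> (\<Sum>A\<in>T. (1/2::real) ^ f A) = 1"
  using assms
proof (induction rule: huffman_run.induct)
  case (single A)
  show ?case by (intro exI[of _ "\<lambda>_. 0"]) auto
next
  case (merge A T B d)
  let ?T' = "insert (A \<union> B) (T - {A, B})"
  have disjnt_T: "disjnt C D" if "C \<in> T" "D \<in> T" "C \<noteq> D" for C D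
    using merge.prems(2) that by (auto simp: pairwise_def)
  have new_tree: "A \<union> B \<notin> T - {A, B}"
    using disjnt_T[of "A \<union> B" A] merge.hyps(1) merge.prems(3) by (auto simp: disjnt_def)
  have "disjoint ?T'"
    using merge.hyps(1,2) merge.prems(2)
    by (auto simp: pairwise_insert disjnt_Un1 disjnt_Un2 disjnt_sym intro: pairwise_subset disjnt_T)
  moreover have "finite ?T'" "{} \<notin> ?T'"
    using merge.prems(1,3) merge.hyps(1) by auto
  ultimately obtain f where f_const: "\<forall>C\<in>?T'. \<forall>s\<in>C. d s = f C"
    and f_sum: "(\<Sum>C\<in>?T'. (1/2::real) ^ f C) = 1"
    using merge.IH by blast
  define g where "g = f(A := Suc (f (A \<union> B)), B := Suc (f (A \<union> B)))"
  show ?case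
  proof (intro exI[of _ g] conjI ballI)
    fix C s assume "C \<in> T" "s \<in> C"
    then show "(if s \<in> A \<union> B then Suc (d s) else d s) = g C"
      using f_const disjnt_T[of C A] disjnt_T[of C B] merge.hyps(1,2)
      by (cases "C = A \<or> C = B") (auto simp: g_def disjnt_iff)
  next
    have "(\<Sum>C\<in>T. (1/2::real) ^ g C)
        = (\<Sum>C\<in>{A, B}. (1/2::real) ^ g C) + (\<Sum>C\<in>T - {A, B}. (1/2::real) ^ g C)"
      using merge.prems(1) merge.hyps(1,2) by (subst sum.subset_diff[of "{A, B}"]) auto
    also have "\<dots> = (1/2) ^ f (A \<union> B) + (\<Sum>C\<in>T - {A, B}. (1/2::real) ^ f C)"
      using merge.hyps(3) by (simp add: g_def)
    also have "\<dots> = 1"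
      using f_sum new_tree merge.prems(1) by simp
    finally show "(\<Sum>C\<in>T. (1/2::real) ^ g C) = 1" .
  qed
qed

lemma huffman_lengths_kraft:
  fixes l :: "'s::finite \<Rightarrow> nat"
  assumes "huffman_lengths p l"
  shows "(\<Sum>s\<in>UNIV. (1/2::real) ^ l s) = 1"
proof -
  have inj_singleton: "inj (\<lambda>s::'s. {s})" by (rule injI) simp
  obtain f where f_const: "\<forall>A\<in>range (\<lambda>s. {s}). \<forall>s\<in>A. l s = f A"
    and f_sum: "(\<Sum>A\<in>range (\<lambda>s::'s. {s}). (1/2::real) ^ f A) = 1"
    using huffman_run_kraft[OF assms[unfolded huffman_lengths_def]]
    by (auto simp: pairwise_def disjnt_def)
  have "(\<Sum>s\<in>UNIV. (1/2::real) ^ l s) = (\<Sum>s\<in>UNIV. (1/2::real) ^ f {s})"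
    using f_const by simp
  also have "\<dots> = 1"
    using f_sum by (simp add: sum.reindex[OF inj_singleton])
  finally show ?thesis .
qed

lemma kraft_sum_nat:
  fixes l :: "'s::finite \<Rightarrow> nat"
  assumes "(\<Sum>s\<in>UNIV. (1/2::real) ^ l s) = 1" and "\<forall>s. l s \<le> m"
  shows "(\<Sum>s\<in>UNIV. 2 ^ (m - l s)) = (2::nat) ^ m"
proof -
  have "real (\<Sum>s\<in>UNIV. 2 ^ (m - l s)) = (\<Sum>s\<in>UNIV. (2::real) ^ (m - l s))"
    by simp
  also have "\<dots> = (\<Sum>s\<in>UNIV. 2 ^ m * (1/2::real) ^ l s)"
    using assms(2) by (intro sum.cong) (simp_all add: power_diff power_one_over)
  also have "\<dots> = 2 ^ m"
    using assms(1) by (simp add: sum_distrib_left[symmetric])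
  finally show ?thesis
    by (metis of_nat_eq_iff of_nat_numeral of_nat_power)
qed

definition low_bits :: "nat \<Rightarrow> nat \<Rightarrow> bool list" where
  "low_bits n a = map (bit a) [0..<n]"

lemma length_low_bits [simp]: "length (low_bits n a) = n"
  by (simp add: low_bits_def)

lemma low_bits_eqD: "low_bits n a = low_bits n b \<Longrightarrow> a mod 2 ^ n = b mod 2 ^ n"
  unfolding low_bits_def take_bit_eq_mod[symmetric]
  by (intro bit_eqI) (auto simp: bit_take_bit_iff)

lemma aedsI_equal_lengths:
  assumes "finite X" and "X \<noteq> {}" and "\<And>xh s. xh \<in> X \<Longrightarrow> F xh s \<in> X"
    and same_length: "\<And>xh s xh' s'. xh \<in> X \<Longrightarrow> xh' \<in> X \<Longrightarrow> F xh s = F xh' s'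
      \<Longrightarrow> length (E xh s) = length (E xh' s')"
    and injective: "\<And>xh s xh' s'. xh \<in> X \<Longrightarrow> xh' \<in> X \<Longrightarrow> F xh s = F xh' s'
      \<Longrightarrow> E xh s = E xh' s' \<Longrightarrow> xh = xh' \<and> s = s'"
  shows "aeds X E F"
  unfolding aeds_def
proof (intro conjI ballI allI)
  fix x
  let ?into_x = "{(xh, s). xh \<in> X \<and> F xh s = x}"
  let ?word = "\<lambda>(xh, s). E xh s"
  show "inj_on ?word ?into_x"
  proof (rule inj_onI)
    fix a b assume a: "a \<in> ?into_x" and b: "b \<in> ?into_x" and eq: "?word a = ?word b"
    obtain xh s xh' s' where "a = (xh, s)" "b = (xh', s')"
      by fastforce
    with a b eq injective[of xh xh' s s'] show "a = b"
      by simp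
  qed
  show "prefix_free (?word ` ?into_x)"
    unfolding prefix_free_def
  proof (intro ballI impI)
    fix u v assume u: "u \<in> ?word ` ?into_x" and v: "v \<in> ?word ` ?into_x" and "u \<noteq> v"
    from u obtain xh s where "xh \<in> X" "F xh s = x" "u = E xh s"
      by auto
    moreover from v obtain xh' s' where "xh' \<in> X" "F xh' s' = x" "v = E xh' s'"
      by auto
    ultimately have "length u = length v"
      using same_length[of xh xh' s s'] by simp
    with \<open>u \<noteq> v\<close> show "\<not> prefix u v"
      by (auto simp: prefix_def)
  qed
qed (use assms(1-3) in auto)

lemma saeds_from_kraft_sum:
  fixes l :: "'s::finite \<Rightarrow> nat"
  assumes "\<forall>s. l s \<le> m" and "(\<Sum>s\<in>UNIV. 2 ^ (m - l s)) = (2::nat) ^ m"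
  shows "\<exists>(X::nat set) E F. saeds X E F \<and> card X = 2 ^ m
    \<and> (\<forall>s. card (state_set X F s) = 2 ^ (m - l s))
    \<and> (\<forall>xh\<in>X. \<forall>s. length (E xh s) = l s)"
proof -
  define blocks :: "('s \<times> nat) set" where "blocks = (SIGMA s:UNIV. {..<2 ^ (m - l s)})"
  have "finite blocks" "card blocks = 2 ^ m"
    using assms(2) by (simp_all add: blocks_def)
  then obtain enc :: "'s \<times> nat \<Rightarrow> nat" where enc: "bij_betw enc blocks {..<2 ^ m}"
    using finite_same_card_bij[of blocks "{..<2 ^ m :: nat}"] by auto
  define X where "X = {..<(2::nat) ^ m}"
  define E where "E xh s = low_bits (l s) xh" for xh s
  define F where "F xh s = enc (s, xh div 2 ^ l s)" for xh s
  have split_states: "(2::nat) ^ m = 2 ^ (m - l s) * 2 ^ l s" for s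
    using assms(1) by (simp flip: power_add)
  have in_blocks: "(s, xh div 2 ^ l s) \<in> blocks" if "xh \<in> X" for xh s
    using that split_states[of s] by (auto simp: X_def blocks_def less_mult_imp_div_less)
  have enc_inj: "inj_on enc blocks"
    using enc by (rule bij_betw_imp_inj_on)
  have F_eqD: "s = s' \<and> xh div 2 ^ l s = xh' div 2 ^ l s'"
    if "xh \<in> X" "xh' \<in> X" "F xh s = F xh' s'" for xh xh' s s'
    using inj_onD[OF enc_inj that(3)[unfolded F_def] in_blocks[OF that(1)] in_blocks[OF that(2)]]
    by auto
  have block_sub: "{s} \<times> {..<2 ^ (m - l s)} \<subseteq> blocks" for s
    by (auto simp: blocks_def)
  have state_set_eq: "state_set X F s = enc ` ({s} \<times> {..<2 ^ (m - l s)})" for s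
  proof
    show "state_set X F s \<subseteq> enc ` ({s} \<times> {..<2 ^ (m - l s)})"
      unfolding state_set_def F_def using in_blocks by (auto simp: blocks_def)
  next
    have "enc (s, k) = F (k * 2 ^ l s) s" "k * 2 ^ l s \<in> X" if "k < 2 ^ (m - l s)" for k
      using that split_states[of s] by (auto simp: F_def X_def)
    then show "enc ` ({s} \<times> {..<2 ^ (m - l s)}) \<subseteq> state_set X F s"
      unfolding state_set_def by blast
  qed
  have "aeds X E F"
  proof (rule aedsI_equal_lengths)
    show "finite X" "X \<noteq> {}" by (simp_all add: X_def lessThan_empty_iff)
    show "F xh s \<in> X" if "xh \<in> X" for xh s
      using bij_betw_apply[OF enc in_blocks[OF that]] by (simp add: F_def X_def)
    show "length (E xh s) = length (E xh' s')"
      if "xh \<in> X" "xh' \<in> X" "F xh s = F xh' s'" for xh s xh' s'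
      using F_eqD[OF that] by (simp add: E_def)
    show "xh = xh' \<and> s = s'"
      if "xh \<in> X" "xh' \<in> X" "F xh s = F xh' s'" "E xh s = E xh' s'" for xh s xh' s'
    proof -
      have "s' = s" "xh div 2 ^ l s = xh' div 2 ^ l s"
        using F_eqD[OF that(1-3)] by auto
      moreover from this(1) have "xh mod 2 ^ l s = xh' mod 2 ^ l s"
        using that(4) by (intro low_bits_eqD) (simp add: E_def)
      ultimately show ?thesis
        by (metis div_mult_mod_eq)
    qed
  qed
  moreover have "\<forall>s t. s \<noteq> t \<longrightarrow> state_set X F s \<inter> state_set X F t = {}"
    unfolding state_set_eq inj_on_image_Int[OF enc_inj block_sub block_sub, symmetric]
    by auto
  moreover have "(\<Union>s. state_set X F s) = X"
    unfolding state_set_eq image_UN[symmetric] using bij_betw_imp_surj_on[OF enc]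
    by (simp add: X_def blocks_def Sigma_def)
  moreover have "\<forall>s. card (state_set X F s) = 2 ^ (m - l s)"
    unfolding state_set_eq using card_image[OF inj_on_subset[OF enc_inj block_sub]] by simp
  moreover have "card X = 2 ^ m" "\<forall>xh\<in>X. \<forall>s. length (E xh s) = l s"
    by (simp_all add: X_def E_def)
  ultimately show ?thesis
    unfolding saeds_def by blast
qed

lemma avg_len_uniform_lengths:
  assumes "\<forall>xh\<in>X. \<forall>s. length (E xh s) = l s" and "(\<Sum>xh\<in>X. Q xh) = 1"
  shows "avg_len p X E Q = (\<Sum>s\<in>UNIV. p s * real (l s))"
proof -
  have "avg_len p X E Q = (\<Sum>xh\<in>X. Q xh * (\<Sum>s\<in>UNIV. p s * real (l s)))"
    unfolding avg_len_def using assms(1)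
    by (intro sum.cong) (auto simp: sum_distrib_left mult_ac)
  also have "\<dots> = (\<Sum>s\<in>UNIV. p s * real (l s))"
    using assms(2) by (simp flip: sum_distrib_right)
  finally show ?thesis .
qed

lemma avg_len_nonneg:
  assumes "stationary p X F Q" and "\<forall>s. 0 \<le> p s"
  shows "0 \<le> avg_len p X E Q"
  using assms unfolding stationary_def avg_len_def by (auto intro!: sum_nonneg)

text \<open>Censoring: the chain watched only outside \<open>x\<^sub>0\<close> is a Markov chain on one state
  less, and its stationary distribution extends back to \<open>x\<^sub>0\<close>.\<close>

lemma markov_chain_stationary_exists:
  fixes P :: "'x \<Rightarrow> 'x \<Rightarrow> real"
  assumes "finite X" and "X \<noteq> {}"
    and "\<And>i j. i \<in> X \<Longrightarrow> j \<in> X \<Longrightarrow> 0 \<le> P i j"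
    and "\<And>i. i \<in> X \<Longrightarrow> (\<Sum>j\<in>X. P i j) = 1"
  shows "\<exists>\<pi>. (\<forall>i\<in>X. 0 \<le> \<pi> i) \<and> (\<Sum>i\<in>X. \<pi> i) = 1 \<and> (\<forall>j\<in>X. \<pi> j = (\<Sum>i\<in>X. \<pi> i * P i j))"
  using assms
proof (induction X arbitrary: P rule: finite_ne_induct)
  case (singleton x)
  then show ?case by (intro exI[of _ "\<lambda>_. 1"]) simp
next
  case (insert x0 X)
  let ?Y = "insert x0 X"
  have row_X: "(\<Sum>j\<in>X. P i j) = 1 - P i x0" if "i \<in> ?Y" for i
    using insert.prems(2)[OF that] insert.hyps(1,3) by simp
  have "0 \<le> (\<Sum>j\<in>X. P x0 j)"
    using insert.prems(1) by (intro sum_nonneg) simp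
  then have "P x0 x0 \<le> 1"
    using row_X[of x0] by simp
  show ?case
  proof (cases "P x0 x0 = 1")
    case True
    then have "P x0 j = 0" if "j \<in> X" for j
      using row_X[of x0] insert.prems(1) insert.hyps(1) that
      by (simp add: sum_nonneg_eq_0_iff)
    moreover have "(\<Sum>i\<in>X. (if i = x0 then 1 else 0) * f i) = (0::real)" for f
      using insert.hyps(3) by (intro sum.neutral) auto
    ultimately show ?thesis
      using True insert.hyps(1,3)
      by (intro exI[of _ "\<lambda>i. if i = x0 then 1 else 0"]) auto
  next
    case False
    define r where "r = 1 - P x0 x0"
    have "r > 0" using \<open>P x0 x0 \<le> 1\<close> False by (simp add: r_def)
    define P' where "P' i j = P i j + P i x0 * P x0 j / r" for i j
    have "0 \<le> P' i j" if "i \<in> X" "j \<in> X" for i j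
      using insert.prems(1) that \<open>r > 0\<close> by (simp add: P'_def)
    moreover have "(\<Sum>j\<in>X. P' i j) = 1" if "i \<in> X" for i
      using row_X[of i] row_X[of x0] that \<open>r > 0\<close>
      by (simp add: P'_def sum.distrib flip: sum_divide_distrib sum_distrib_left) (simp add: r_def)
    ultimately obtain \<pi>' where \<pi>'_nonneg: "\<forall>i\<in>X. 0 \<le> \<pi>' i"
      and \<pi>'_sum: "(\<Sum>i\<in>X. \<pi>' i) = 1" and \<pi>'_stat: "\<forall>j\<in>X. \<pi>' j = (\<Sum>i\<in>X. \<pi>' i * P' i j)"
      using insert.IH by blast
    define c where "c = (\<Sum>i\<in>X. \<pi>' i * P i x0) / r"
    have "0 \<le> c"
      unfolding c_def using \<pi>'_nonneg insert.prems(1) \<open>r > 0\<close>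
      by (intro divide_nonneg_pos sum_nonneg mult_nonneg_nonneg) auto
    define \<sigma> where "\<sigma> i = (if i = x0 then c else \<pi>' i)" for i
    have \<sigma>_X: "(\<Sum>i\<in>X. \<sigma> i * f i) = (\<Sum>i\<in>X. \<pi>' i * f i)" for f
      using insert.hyps(3) by (intro sum.cong) (auto simp: \<sigma>_def)
    have \<sigma>_stat: "\<sigma> j = (\<Sum>i\<in>?Y. \<sigma> i * P i j)" if "j \<in> ?Y" for j
    proof -
      have "(\<Sum>i\<in>?Y. \<sigma> i * P i j) = c * P x0 j + (\<Sum>i\<in>X. \<pi>' i * P i j)"
        using insert.hyps(1,3) \<sigma>_X[of "\<lambda>i. P i j"] by (simp add: \<sigma>_def)
      also have "\<dots> = \<sigma> j"
      proof (cases "j = x0")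
        case True
        then show ?thesis
          using \<open>r > 0\<close> by (simp add: \<sigma>_def c_def r_def field_simps)
      next
        case False
        then have "j \<in> X" using that by simp
        have "(\<Sum>i\<in>X. \<pi>' i * P' i j) = (\<Sum>i\<in>X. \<pi>' i * P i j + \<pi>' i * P i x0 / r * P x0 j)"
          by (simp add: P'_def distrib_left mult_ac)
        also have "\<dots> = (\<Sum>i\<in>X. \<pi>' i * P i j) + c * P x0 j"
          by (simp add: c_def sum.distrib sum_distrib_right sum_divide_distrib)
        finally have "(\<Sum>i\<in>X. \<pi>' i * P' i j) = (\<Sum>i\<in>X. \<pi>' i * P i j) + c * P x0 j" .
        then show ?thesis
          using \<pi>'_stat \<open>j \<in> X\<close> False by (simp add: \<sigma>_def)
      qed
      finally show ?thesis ..
    qed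
    have \<sigma>_sum: "(\<Sum>i\<in>?Y. \<sigma> i) = 1 + c"
      using insert.hyps(1,3) \<sigma>_X[of "\<lambda>_. 1"] \<pi>'_sum by (simp add: \<sigma>_def)
    show ?thesis
    proof (intro exI[of _ "\<lambda>i. \<sigma> i / (1 + c)"] conjI ballI)
      show "0 \<le> \<sigma> i / (1 + c)" if "i \<in> ?Y" for i
        using that \<pi>'_nonneg \<open>0 \<le> c\<close> by (auto simp: \<sigma>_def)
      show "(\<Sum>i\<in>?Y. \<sigma> i / (1 + c)) = 1"
        using \<sigma>_sum \<open>0 \<le> c\<close> by (simp flip: sum_divide_distrib)
      show "\<sigma> j / (1 + c) = (\<Sum>i\<in>?Y. \<sigma> i / (1 + c) * P i j)" if "j \<in> ?Y" for j
        using \<sigma>_stat[OF that] by (simp add: sum_divide_distrib)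
    qed
  qed
qed

lemma aeds_stationary_exists:
  fixes p :: "'s::finite \<Rightarrow> real"
  assumes "aeds X E F" and "\<forall>s. 0 \<le> p s" and "(\<Sum>s\<in>UNIV. p s) = 1"
  shows "\<exists>Q. stationary p X F Q"
proof -
  have X: "finite X" "X \<noteq> {}" "\<forall>xh\<in>X. \<forall>s. F xh s \<in> X"
    using assms(1) unfolding aeds_def by blast+
  define P where "P xh x = (\<Sum>s\<in>{s. F xh s = x}. p s)" for xh x
  have "0 \<le> P xh x" for xh x
    using assms(2) by (simp add: P_def sum_nonneg)
  moreover have "(\<Sum>x\<in>X. P xh x) = 1" if "xh \<in> X" for xh
    using sum.group[of UNIV X "F xh" p] X(1,3) assms(3) that by (auto simp: P_def)
  ultimately obtain Q where Q_nonneg: "\<forall>x\<in>X. 0 \<le> Q x" and Q_sum: "(\<Sum>x\<in>X. Q x) = 1"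
    and Q_invariant: "\<forall>x\<in>X. Q x = (\<Sum>xh\<in>X. Q xh * P xh x)"
    using markov_chain_stationary_exists[of X P] X(1,2) by blast
  have "Q x = (\<Sum>xh\<in>X. \<Sum>s\<in>{s. F xh s = x}. p s * Q xh)" if "x \<in> X" for x
  proof -
    have "Q x = (\<Sum>xh\<in>X. Q xh * P xh x)"
      using Q_invariant that by blast
    also have "\<dots> = (\<Sum>xh\<in>X. \<Sum>s\<in>{s. F xh s = x}. p s * Q xh)"
      by (simp add: P_def sum_distrib_left mult.commute)
    finally show ?thesis .
  qed
  with Q_nonneg Q_sum have "stationary p X F Q"
    unfolding stationary_def by blast
  then show ?thesis
    by blast
qed

theorem theorem3:
  fixes p :: "'s::finite \<Rightarrow> real" and l :: "'s \<Rightarrow> nat"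
  assumes "card (UNIV :: 's set) \<ge> 2"
    and "\<forall>s. p s > 0"
    and "(\<Sum>s\<in>UNIV. p s) = 1"
    and "huffman_lengths p l"
  defines "lmax \<equiv> Max (range l)"
    and "LH \<equiv> (\<Sum>s\<in>UNIV. p s * real (l s))"
  shows "(\<exists>(X::nat set) E F. saeds X E F \<and> card X = 2 ^ lmax
            \<and> (\<forall>s. card (state_set X F s) = 2 ^ (lmax - l s))
            \<and> (\<forall>xh\<in>X. \<forall>s. length (E xh s) = l s)
            \<and> (\<forall>Q. stationary p X F Q \<longrightarrow> avg_len p X E Q = LH))
       \<and> Inf {avg_len p X E Q | (X::nat set) E F Q.
               saeds X E F \<and> card X = 2 ^ lmax \<and> stationary p X F Q} \<le> LH"
proof -
  let ?lengths = "{avg_len p X E Q | (X::nat set) E F Q.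
    saeds X E F \<and> card X = 2 ^ lmax \<and> stationary p X F Q}"
  have lengths_le: "\<forall>s. l s \<le> lmax"
    by (simp add: lmax_def)
  have "(\<Sum>s\<in>UNIV. 2 ^ (lmax - l s)) = (2::nat) ^ lmax"
    using huffman_lengths_kraft[OF assms(4)] lengths_le by (rule kraft_sum_nat)
  then obtain X :: "nat set" and E F where
    code: "saeds X E F" "card X = 2 ^ lmax" "\<forall>s. card (state_set X F s) = 2 ^ (lmax - l s)"
      "\<forall>xh\<in>X. \<forall>s. length (E xh s) = l s"
    using saeds_from_kraft_sum[OF lengths_le] by blast
  have avg_len_LH: "avg_len p X E Q = LH" if "stationary p X F Q" for Q
    using avg_len_uniform_lengths[OF code(4)] that unfolding stationary_def LH_def by blast
  have p_nonneg: "\<forall>s. 0 \<le> p s"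
    using assms(2) by (simp add: less_imp_le)
  have "aeds X E F"
    using code(1) unfolding saeds_def by blast
  then obtain Q where Q: "stationary p X F Q"
    using aeds_stationary_exists p_nonneg assms(3) by blast
  have "avg_len p X E Q \<in> ?lengths"
    using code(1,2) Q by blast
  then have "LH \<in> ?lengths"
    using avg_len_LH[OF Q] by simp
  moreover have "bdd_below ?lengths"
    by (rule bdd_belowI[of _ 0]) (auto simp: avg_len_nonneg p_nonneg)
  ultimately have "Inf ?lengths \<le> LH"
    by (rule cInf_lower)
  with code avg_len_LH show ?thesis
    by blast
qed

end
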